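(* The set $E(K_4)\times E(K_6)$ can be partitioned into $14$ blocks; that is, $g(K_4,K_6)\le 14<(4-1)(6-1)$.
   Context: $K_m$ is the complete graph on $m$ vertices. A complete bipartite subgraph of a graph $G$ has two disjoint nonempty vertex classes $X,Y$ and edge set all $xy$ with $x\in X,y\in Y$. For graphs $G,H$, a block is a set $E(B_1)\times E(B_2)$ where $B_1$ is a complete bipartite subgraph of $G$ and $B_2$ a complete bipartite subgraph of $H$; $g(G,H)$ is the minimum number of blocks partitioning $E(G)\times E(H)$. *)

theory Defs
  imports Main
begin

text \<open>Graphs are represented by their edge sets: an edge is a 2-element set of vertices.\<close>

definition complete_graph :: "nat \<Rightarrow> nat set set" where
  "complete_graph m = {{x, y} | x y. x < m \<and> y < m \<and> x \<noteq> y}"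

definition biclique_edges :: "'a set \<Rightarrow> 'a set \<Rightarrow> 'a set set" where
  "biclique_edges X Y = {{x, y} | x y. x \<in> X \<and> y \<in> Y}"

definition cbs_edges :: "'a set set \<Rightarrow> 'a set set \<Rightarrow> bool" where
  "cbs_edges E F \<longleftrightarrow> (\<exists>X Y. X \<noteq> {} \<and> Y \<noteq> {} \<and> X \<inter> Y = {} \<and>
      biclique_edges X Y \<subseteq> E \<and> F = biclique_edges X Y)"

definition is_block :: "'a set set \<Rightarrow> 'b set set \<Rightarrow> ('a set \<times> 'b set) set \<Rightarrow> bool" where
  "is_block EG EH B \<longleftrightarrow> (\<exists>F1 F2. cbs_edges EG F1 \<and> cbs_edges EH F2 \<and> B = F1 \<times> F2)"

definition block_partition :: "'a set set \<Rightarrow> 'b set set \<Rightarrow> ('a set \<times> 'b set) set set \<Rightarrow> bool" where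
  "block_partition EG EH P \<longleftrightarrow> finite P \<and> (\<forall>B\<in>P. is_block EG EH B) \<and>
      pairwise disjnt P \<and> \<Union>P = EG \<times> EH"

definition g :: "'a set set \<Rightarrow> 'b set set \<Rightarrow> nat" where
  "g EG EH = (LEAST n. \<exists>P. block_partition EG EH P \<and> card P = n)"

end

theory Submission
  imports Defs
begin

(* The six edges of K4 form three perfect matchings {01,23}, {02,13}, {03,12}, and the union of
   any two of them is a 4-cycle, i.e. a K_{2,2}. A family of products F1 x F2 partitions
   E(G) x E(H) as soon as, for every edge e of G, the second factors of the blocks with e in F1
   partition E(H). So pick a biclique partition of K6 for each matching such that the partitions
   for any two matchings share two pieces; each shared piece is paired once with the 4-cycle
   through both matchings, every other piece with the two single edges of its matching. This
   gives 3 * 2 + 2 * (1 + 2 + 1) = 14 blocks instead of the 3 * 5 of a product of partitions. *)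

lemma doubleton_mem_biclique_edges:
  "{a, b} \<in> biclique_edges X Y \<longleftrightarrow> (a \<in> X \<and> b \<in> Y) \<or> (b \<in> X \<and> a \<in> Y)"
  unfolding biclique_edges_def by (auto simp: doubleton_eq_iff)

lemma disjnt_biclique_edges:
  assumes "disjnt X X' \<or> disjnt Y Y'" "disjnt X Y' \<or> disjnt Y X'"
  shows "disjnt (biclique_edges X Y) (biclique_edges X' Y')"
  using assms unfolding biclique_edges_def disjnt_def by (auto simp: doubleton_eq_iff)

lemma card_biclique_edges:
  assumes "finite X" "finite Y" "X \<inter> Y = {}"
  shows "card (biclique_edges X Y) = card X * card Y"
proof -
  have "biclique_edges X Y = (\<lambda>(x, y). {x, y}) ` (X \<times> Y)"
    unfolding biclique_edges_def by auto
  moreover have "inj_on (\<lambda>(x, y). {x, y}) (X \<times> Y)"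
    using assms(3) by (auto simp: inj_on_def doubleton_eq_iff)
  ultimately show ?thesis
    by (simp add: card_image card_cartesian_product)
qed

lemma biclique_edges_subset_complete_graph:
  assumes "X \<inter> Y = {}" "X \<subseteq> {..<n}" "Y \<subseteq> {..<n}"
  shows "biclique_edges X Y \<subseteq> complete_graph n"
  using assms unfolding biclique_edges_def complete_graph_def by blast

lemma cbs_edges_complete_graph:
  assumes "X \<noteq> {}" "Y \<noteq> {}" "X \<inter> Y = {}" "X \<subseteq> {..<n}" "Y \<subseteq> {..<n}"
  shows "cbs_edges (complete_graph n) (biclique_edges X Y)"
  unfolding cbs_edges_def
  using assms biclique_edges_subset_complete_graph by (intro exI[of _ X] exI[of _ Y]) simp

lemma complete_graph_eq_2_subsets: "complete_graph n = {A. A \<subseteq> {..<n} \<and> card A = 2}"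
  unfolding complete_graph_def card_2_iff by blast

lemma card_complete_graph: "card (complete_graph n) = n choose 2"
  by (simp add: complete_graph_eq_2_subsets n_subsets)

lemma finite_complete_graph: "finite (complete_graph n)"
  unfolding complete_graph_eq_2_subsets by (rule finite_subset[of _ "Pow {..<n}"]) auto

lemma complete_graph_0: "complete_graph 0 = {}"
  by (simp add: complete_graph_def)

lemma complete_graph_Suc: "complete_graph (Suc n) = complete_graph n \<union> (\<lambda>x. {x, n}) ` {..<n}"
  unfolding complete_graph_def by (auto simp: less_Suc_eq insert_commute)

definition list_partition :: "'a set list \<Rightarrow> 'a set \<Rightarrow> bool" where
  "list_partition Cs E \<longleftrightarrow> sorted_wrt disjnt Cs \<and> \<Union>(set Cs) = E"

lemma card_Union_sorted_wrt_disjnt: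
  assumes "sorted_wrt disjnt Cs" "\<forall>C\<in>set Cs. finite C"
  shows "card (\<Union>(set Cs)) = sum_list (map card Cs)"
  using assms
proof (induction Cs)
  case (Cons C Cs)
  then have "C \<inter> \<Union>(set Cs) = {}"
    by (auto simp: disjnt_def)
  with Cons show ?case
    by (simp add: card_Un_disjoint)
qed simp

lemma list_partition_if_card_sum:
  assumes "finite E" "\<forall>C\<in>set Cs. C \<subseteq> E" "sorted_wrt disjnt Cs"
    and "sum_list (map card Cs) = card E"
  shows "list_partition Cs E"
proof -
  have "\<forall>C\<in>set Cs. finite C"
    using assms(1,2) finite_subset by blast
  then have "card (\<Union>(set Cs)) = card E"
    using assms(3,4) card_Union_sorted_wrt_disjnt by metis
  moreover have "\<Union>(set Cs) \<subseteq> E"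
    using assms(2) by blast
  ultimately show ?thesis
    unfolding list_partition_def using assms(1,3) card_subset_eq by blast
qed

lemma pairwise_set_if_sorted_wrt:
  assumes "sorted_wrt r xs" "symp r"
  shows "pairwise r (set xs)"
proof (rule pairwiseI)
  fix x y assume "x \<in> set xs" "y \<in> set xs" "x \<noteq> y"
  then obtain i j where "i < length xs" "j < length xs" "i \<noteq> j" "x = xs ! i" "y = xs ! j"
    by (metis in_set_conv_nth)
  then show "r x y"
    using assms sorted_wrt_nth_less[OF assms(1)] by (metis linorder_neq_iff sympD)
qed

lemma list_partition_complete_graphI:
  fixes D :: "(nat set \<times> nat set) list"
  assumes vertices: "\<forall>(X, Y)\<in>set D. X \<inter> Y = {} \<and> X \<subseteq> {..<n} \<and> Y \<subseteq> {..<n}"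
    and disjoint: "sorted_wrt (\<lambda>(X, Y) (X', Y'). (disjnt X X' \<or> disjnt Y Y') \<and> (disjnt X Y' \<or> disjnt Y X')) D"
    and count: "sum_list (map (\<lambda>(X, Y). card X * card Y) D) = n choose 2"
  shows "list_partition (map (case_prod biclique_edges) D) (complete_graph n)"
proof (rule list_partition_if_card_sum)
  show "\<forall>C\<in>set (map (case_prod biclique_edges) D). C \<subseteq> complete_graph n"
  proof
    fix C assume "C \<in> set (map (case_prod biclique_edges) D)"
    then obtain X Y where XY: "(X, Y) \<in> set D" and C: "C = biclique_edges X Y"
      by auto
    show "C \<subseteq> complete_graph n"
      unfolding C using vertices XY by (intro biclique_edges_subset_complete_graph) auto
  qed
  show "sorted_wrt disjnt (map (case_prod biclique_edges) D)"
    unfolding sorted_wrt_map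
    by (rule sorted_wrt_mono_rel[OF _ disjoint]) (clarsimp intro!: disjnt_biclique_edges)
  have "card (biclique_edges X Y) = card X * card Y" if "(X, Y) \<in> set D" for X Y
    using vertices that finite_subset[OF _ finite_lessThan] by (intro card_biclique_edges) auto
  then have "map card (map (case_prod biclique_edges) D) = map (\<lambda>(X, Y). card X * card Y) D"
    by auto
  then show "sum_list (map card (map (case_prod biclique_edges) D)) = card (complete_graph n)"
    using count by (simp only: card_complete_graph)
qed (rule finite_complete_graph)

definition fibre :: "'a \<Rightarrow> ('a set \<times> 'b set) list \<Rightarrow> 'b set list" where
  "fibre e bs = map snd (filter (\<lambda>(F1, F2). e \<in> F1) bs)"

lemma sorted_wrt_disjnt_products:
  assumes "\<forall>e. sorted_wrt disjnt (fibre e bs)"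
  shows "sorted_wrt disjnt (map (\<lambda>(F1, F2). F1 \<times> F2) bs)"
  using assms
proof (induction bs)
  case (Cons b bs)
  obtain F1 F2 where b: "b = (F1, F2)" by fastforce
  have "disjnt (F1 \<times> F2) (F1' \<times> F2')" if "(F1', F2') \<in> set bs" for F1' F2'
    unfolding disjnt_def
  proof (rule equals0I)
    fix p assume "p \<in> F1 \<times> F2 \<inter> F1' \<times> F2'"
    then have p: "p \<in> F1 \<times> F2" "p \<in> F1' \<times> F2'" by auto
    have "F2' \<in> set (fibre (fst p) bs)"
      using that p(2) by (force simp: fibre_def)
    then have "disjnt F2 F2'"
      using Cons.prems[rule_format, of "fst p"] p(1) b by (auto simp: fibre_def)
    then show False
      using p by (auto simp: disjnt_def)
  qed
  moreover have "\<forall>e. sorted_wrt disjnt (fibre e bs)"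
    using Cons.prems by (auto simp: fibre_def split: if_splits)
  ultimately show ?case
    using Cons.IH b by (auto simp: sorted_wrt_map)
qed simp

lemma block_partition_products_if_fibres_partition:
  fixes bs :: "('a set set \<times> 'b set set) list"
  assumes blocks: "\<forall>(F1, F2)\<in>set bs. cbs_edges EG F1 \<and> cbs_edges EH F2"
    and fibres: "\<forall>e\<in>EG. list_partition (fibre e bs) EH"
  shows "block_partition EG EH (set (map (\<lambda>(F1, F2). F1 \<times> F2) bs))"
    (is "block_partition EG EH ?P")
proof -
  have "sorted_wrt disjnt (fibre e bs)" for e
  proof (cases "e \<in> EG")
    case True
    then show ?thesis using fibres by (simp add: list_partition_def)
  next
    case False
    then have "fibre e bs = []"
      using blocks by (auto simp: fibre_def filter_empty_conv cbs_edges_def)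
    then show ?thesis by simp
  qed
  then have "pairwise disjnt ?P"
    by (intro pairwise_set_if_sorted_wrt sorted_wrt_disjnt_products) (auto intro: sympI disjnt_sym)
  moreover have "\<Union>?P = EG \<times> EH"
  proof
    show "\<Union>?P \<subseteq> EG \<times> EH"
      using blocks unfolding cbs_edges_def by fastforce
    show "EG \<times> EH \<subseteq> \<Union>?P"
    proof
      fix p assume "p \<in> EG \<times> EH"
      then obtain F2 where "F2 \<in> set (fibre (fst p) bs)" "snd p \<in> F2"
        using fibres by (force simp: list_partition_def)
      moreover from this obtain F1 where "(F1, F2) \<in> set bs" "fst p \<in> F1"
        unfolding fibre_def by auto
      ultimately show "p \<in> \<Union>?P"
        by (auto intro!: bexI[of _ "(F1, F2)"] simp: mem_Times_iff)
    qed
  qed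
  moreover have "\<forall>B\<in>?P. is_block EG EH B"
    using blocks unfolding is_block_def by fastforce
  ultimately show ?thesis
    unfolding block_partition_def by blast
qed

lemma g_le_length_if_fibres_partition:
  fixes bs :: "('a set set \<times> 'b set set) list"
  assumes "\<forall>(F1, F2)\<in>set bs. cbs_edges EG F1 \<and> cbs_edges EH F2"
    and "\<forall>e\<in>EG. list_partition (fibre e bs) EH"
  shows "g EG EH \<le> length bs"
proof -
  have "g EG EH \<le> card (set (map (\<lambda>(F1, F2). F1 \<times> F2) bs))"
    unfolding g_def using block_partition_products_if_fibres_partition[OF assms]
    by (intro Least_le) blast
  also have "\<dots> \<le> length bs"
    using card_length by (metis length_map)
  finally show ?thesis .
qed

(* K6_partition_0k is used over the perfect matching of K4 containing {0, k}; a pair (X, Y)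
   stands for the biclique with classes X and Y. *)
definition K6_partition_01 :: "(nat set \<times> nat set) list" where
  "K6_partition_01 = [({0,4}, {1,2,5}), ({0,2}, {3}), ({1,2,3}, {5}), ({0,3}, {4}), ({1}, {2,3})]"

definition K6_partition_02 :: "(nat set \<times> nat set) list" where
  "K6_partition_02 = [({0,5}, {1,3}), ({2}, {3,4,5}), ({0}, {2,5}), ({1,5}, {4}), ({0,3}, {4}), ({1}, {2,3})]"

definition K6_partition_03 :: "(nat set \<times> nat set) list" where
  "K6_partition_03 = [({0,2,3}, {1,4}), ({0}, {2,5}), ({1,5}, {4}), ({0,2}, {3}), ({1,2,3}, {5})]"

lemma list_partition_K6:
  "list_partition (map (case_prod biclique_edges) K6_partition_01) (complete_graph 6)"
  "list_partition (map (case_prod biclique_edges) K6_partition_02) (complete_graph 6)"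
  "list_partition (map (case_prod biclique_edges) K6_partition_03) (complete_graph 6)"
  by (intro list_partition_complete_graphI;
      simp add: K6_partition_01_def K6_partition_02_def K6_partition_03_def choose_two)+

(* Eight blocks pair a single edge of K4 with an unshared piece, six pair a 4-cycle of K4 with a
   piece shared by the partitions of its two matchings. *)
definition K4_K6_blocks :: "(nat set set \<times> nat set set) list" where
  "K4_K6_blocks = map (map_prod (case_prod biclique_edges) (case_prod biclique_edges))
    [(({0}, {1}), ({0,4}, {1,2,5})), (({2}, {3}), ({0,4}, {1,2,5})),
     (({0}, {2}), ({0,5}, {1,3})), (({0}, {2}), ({2}, {3,4,5})),
     (({1}, {3}), ({0,5}, {1,3})), (({1}, {3}), ({2}, {3,4,5})),
     (({0}, {3}), ({0,2,3}, {1,4})), (({1}, {2}), ({0,2,3}, {1,4})),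
     (({0,1}, {2,3}), ({0}, {2,5})), (({0,1}, {2,3}), ({1,5}, {4})),
     (({0,2}, {1,3}), ({0,2}, {3})), (({0,2}, {1,3}), ({1,2,3}, {5})),
     (({0,3}, {1,2}), ({0,3}, {4})), (({0,3}, {1,2}), ({1}, {2,3}))]"

lemma K4_K6_blocks_are_blocks:
  "\<forall>(F1, F2)\<in>set K4_K6_blocks. cbs_edges (complete_graph 4) F1 \<and> cbs_edges (complete_graph 6) F2"
  by (simp add: K4_K6_blocks_def cbs_edges_complete_graph)

lemma complete_graph_4: "complete_graph 4 = {{0,1}, {2,3}} \<union> {{0,2}, {1,3}} \<union> {{0,3}, {1,2}}"
  by (simp add: numeral_eq_Suc complete_graph_Suc complete_graph_0 lessThan_Suc insert_commute)

lemma fibre_K4_K6_blocks: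
  "e \<in> {{0,1}, {2,3}} \<Longrightarrow> fibre e K4_K6_blocks = map (case_prod biclique_edges) K6_partition_01"
  "e \<in> {{0,2}, {1,3}} \<Longrightarrow> fibre e K4_K6_blocks = map (case_prod biclique_edges) K6_partition_02"
  "e \<in> {{0,3}, {1,2}} \<Longrightarrow> fibre e K4_K6_blocks = map (case_prod biclique_edges) K6_partition_03"
  by (elim insertE emptyE; simp add: fibre_def K4_K6_blocks_def filter_map comp_def
      doubleton_mem_biclique_edges K6_partition_01_def K6_partition_02_def K6_partition_03_def)+

theorem mainTheorem8:
  shows "g (complete_graph 4) (complete_graph 6) \<le> 14 \<and> (14::nat) < (4 - 1) * (6 - 1)"
proof -
  have "g (complete_graph 4) (complete_graph 6) \<le> length K4_K6_blocks"
  proof (rule g_le_length_if_fibres_partition)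
    show "\<forall>e\<in>complete_graph 4. list_partition (fibre e K4_K6_blocks) (complete_graph 6)"
      unfolding complete_graph_4 using fibre_K4_K6_blocks list_partition_K6 by auto
  qed (rule K4_K6_blocks_are_blocks)
  then show ?thesis
    by (simp add: K4_K6_blocks_def)
qed

end
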